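(* Let $f:\mathbb{R}^n\to\mathbb{R}^n$ and $x^*\in\mathbb{R}^n$ with $f(x^* )=0$. Assume: $J_f(x^* )$ has a one-dimensional null space $\mathcal{N}=\mathrm{span}\{\phi\}$ and closed range $\mathcal{X}$ with $\mathbb{R}^n=\mathcal{N}\oplus\mathcal{X}$; $f$ is twice Lipschitz continuously differentiable in a neighborhood of $x^*$; and, with $P_\mathcal{N}$ the projection onto $\mathcal{N}$ parallel to $\mathcal{X}$, $P_\mathcal{N}H_f(x^* )(\phi,\phi)\neq 0$. Assume moreover that for every $x$ with $P_\mathcal{N}(x-x^* )\neq 0$ the linear map $\bar D_1(x):\mathcal{N}\to\mathcal{N}$, $\bar D_1(x)(z)=P_\mathcal{N}H_f(x^* )\big(P_\mathcal{N}(x-x^* ),P_\mathcal{N}z\big)$, is nonsingular. Let $\{x_j\}_j$ be iterates generated by an nlKrylov method (as in the context) and suppose there is a constant $c$ such that $\|t_j\|\le c\|f(x_j)\|^2$ for all $j$, where $t_j=J_f(x_j)(x_{j+1}-x_j)+f(x_j)$. Then for $\rho>0$ and $\gamma>0$ sufficiently small, $J_f(x_0)^{-1}$ exists for all $x_0\in W(\rho,\gamma)$, and the sequence $\{x_j\}_j$ converges to $x^*$ with $$\|P_\mathcal{X}(x_{j+1}-x^* )\|\le K_1\|x_j-x^*\|^2$$ for some constant $K_1>0$, and $$\lim_{j\to\infty}\frac{\|P_\mathcal{N}(x_{j+1}-x^* )\|}{\|P_\mathcal{N}(x_j-x^* )\|}=\frac12.$$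
   Context: Norms are Euclidean 2-norms; $J_f(x)$ is the Jacobian and $H_f(x)$ the Hessian (second derivative, a symmetric bilinear map $\mathbb{R}^n\times\mathbb{R}^n\to\mathbb{R}^n$) of $f$ at $x$. $P_\mathcal{X}=I-P_\mathcal{N}$. For $\rho,\gamma>0$, the region $W(\rho,\gamma)=\{x\in\mathbb{R}^n:\ 0<\|x-x^*\|<\rho,\ \|P_\mathcal{X}(x-x^* )\|\le\gamma\|P_\mathcal{N}(x-x^* )\|\}$. An nlKrylov method solves $f(x)=0$ as follows: at iteration $j$ it holds matrices $P_j,V_j\in\mathbb{R}^{n\times n_j}$ (search directions and approximations of $J_f(x_j)P_j$, built from previous iterates, Jacobian-vector products and an inner linear solver applied to $J_f(x_j)\hat p=-f(x_j)$), with $V_j^TV_j=I_{n_j}$; it sets $y_j=-V_j^Tf(x_j)$ and updates $x_{j+1}=x_j+P_jy_j$. The vector $t_j$ is the inexactness of this step viewed as an inexact Newton step. *)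

theory Defs
  imports "HOL-Analysis.Analysis"
begin

definition proj_along :: "'a::real_vector set \<Rightarrow> 'a set \<Rightarrow> 'a \<Rightarrow> 'a" where
  "proj_along N X v = (THE u. u \<in> N \<and> v - u \<in> X)"

definition W_region :: "('a::real_normed_vector \<Rightarrow> 'a) \<Rightarrow> 'a \<Rightarrow> real \<Rightarrow> real \<Rightarrow> 'a set" where
  "W_region PN xs \<rho> \<gamma> = {x. 0 < norm (x - xs) \<and> norm (x - xs) < \<rho> \<and>
      norm ((x - xs) - PN (x - xs)) \<le> \<gamma> * norm (PN (x - xs))}"

text \<open>Iterates of an nlKrylov method: at step j, the columns of P_j and V_j are given as
  lists of vectors of equal length n_j; V_j has orthonormal columns; y_j = - V_j^T f(x_j)
  and x_{j+1} = x_j + P_j y_j.\<close>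
definition nlkrylov_iterates ::
  "('a::real_inner \<Rightarrow> 'a) \<Rightarrow> (nat \<Rightarrow> 'a) \<Rightarrow> (nat \<Rightarrow> 'a list) \<Rightarrow> (nat \<Rightarrow> 'a list) \<Rightarrow> bool" where
  "nlkrylov_iterates f x P V \<longleftrightarrow>
     (\<forall>j. length (P j) = length (V j) \<and>
        (\<forall>a < length (V j). \<forall>b < length (V j).
            (V j ! a) \<bullet> (V j ! b) = (if a = b then 1 else 0)) \<and>
        x (Suc j) = x j + (\<Sum>k < length (V j). (- ((V j ! k) \<bullet> f (x j))) *\<^sub>R (P j ! k)))"

end

theory Submission
  imports Defs
begin

(* Write e = x - xs = s phi + w, where s is the coordinate of e along the null direction
   phi and w lies in the range X of J xs.  Near xs, J x = J xs + H xs e + O(|e|^2), and to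
   leading order the part of J x mapping N to N is s beta, with beta = P_N (H xs phi phi)
   nonzero.  Hence on a wedge |w| \<le> \<gamma> |s| the Jacobian is invertible with an inverse of
   size O(1/|s|).  Expanding f to second order, an inexact Newton step with |t| \<le> c |f|^2
   sends s to s/2 + O(|w| + |e| |s|) and w to O(|e|^2).  For a thin and short wedge this
   keeps the iterates inside it, contracts |e| by a fixed factor, makes the range component
   quadratically small and halves the null component in the limit. *)

lemma lipschitz_derivative_remainder:
  fixes F :: "'a::real_normed_vector \<Rightarrow> 'b::real_normed_vector" and F' :: "'a \<Rightarrow> 'a \<Rightarrow>\<^sub>L 'b"
  assumes deriv: "\<And>y. y \<in> ball a r \<Longrightarrow> (F has_derivative F' y) (at y)"
    and lip: "\<And>y z. y \<in> ball a r \<Longrightarrow> z \<in> ball a r \<Longrightarrow> norm (F' y - F' z) \<le> L * norm (y - z)"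
    and L: "0 \<le> L" and x: "x \<in> ball a r"
  shows "norm (F x - F a - F' a (x - a)) \<le> L * (norm (x - a))\<^sup>2"
proof -
  let ?S = "closed_segment a x"
  have S: "?S \<subseteq> ball a r"
    using x by (intro closed_segment_subset) (auto intro: le_less_trans[OF zero_le_dist])
  have "((\<lambda>y. F y - F' a (y - a)) has_derivative (F' y - F' a)) (at y within ?S)" if "y \<in> ?S" for y
  proof -
    have "(F has_derivative F' y) (at y within ?S)"
      using deriv[of y] S that by (meson has_derivative_at_withinI subsetD)
    then show ?thesis
      by (auto intro!: derivative_eq_intros simp: blinfun.diff_left)
  qed
  moreover have "onorm (F' y - F' a) \<le> L * norm (x - a)" if "y \<in> ?S" for y
  proof -
    have "y \<in> ball a r" "a \<in> ball a r"
      using S that by auto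
    then have "onorm (F' y - F' a) \<le> L * norm (y - a)"
      using lip[of y a] by (simp add: norm_blinfun.rep_eq)
    also have "\<dots> \<le> L * norm (x - a)"
      using segment_bound1[OF that] L by (simp add: mult_left_mono)
    finally show ?thesis .
  qed
  ultimately have "norm ((F x - F' a (x - a)) - (F a - F' a (a - a))) \<le> L * norm (x - a) * norm (x - a)"
    by (intro differentiable_bound[OF convex_closed_segment]) auto
  then show ?thesis
    by (simp add: power2_eq_square blinfun.zero_right algebra_simps)
qed

lemma lipschitz_second_derivative_taylor:
  fixes F :: "'a::real_normed_vector \<Rightarrow> 'b::real_normed_vector"
    and F' :: "'a \<Rightarrow> 'a \<Rightarrow>\<^sub>L 'b" and F'' :: "'a \<Rightarrow> 'a \<Rightarrow>\<^sub>L 'a \<Rightarrow>\<^sub>L 'b"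
  assumes deriv: "\<And>y. y \<in> ball a r \<Longrightarrow> (F has_derivative F' y) (at y)"
    and deriv2: "\<And>y. y \<in> ball a r \<Longrightarrow> (F' has_derivative F'' y) (at y)"
    and lip: "\<And>y z. y \<in> ball a r \<Longrightarrow> z \<in> ball a r \<Longrightarrow> norm (F'' y - F'' z) \<le> L * norm (y - z)"
    and L: "0 \<le> L" and x: "x \<in> ball a r"
  shows "norm (F x - F a - F' a (x - a) - (1/2) *\<^sub>R F'' a (x - a) (x - a)) \<le> L * (norm (x - a))^3"
proof -
  define e where "e = x - a"
  let ?p = "\<lambda>t::real. a + t *\<^sub>R e"
  have p_ball: "?p t \<in> ball a r" if "t \<in> {0..1}" for t
  proof -
    have "norm (t *\<^sub>R e) \<le> norm e" using that by (auto simp: mult_left_le_one_le)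
    then show ?thesis using x by (simp add: e_def dist_norm norm_minus_commute)
  qed
  let ?g = "\<lambda>t. F (?p t) - t *\<^sub>R F' a e - (t\<^sup>2/2) *\<^sub>R F'' a e e"
  let ?g' = "\<lambda>t h. h *\<^sub>R (F' (?p t) e - F' a e - t *\<^sub>R F'' a e e)"
  have "(?g has_derivative ?g' t) (at t within {0..1})" if t: "t \<in> {0..1}" for t
  proof -
    have "(?p has_derivative (\<lambda>h. h *\<^sub>R e)) (at t within {0..1})"
      by (auto intro!: derivative_eq_intros)
    from has_derivative_in_compose[OF this has_derivative_at_withinI[OF deriv[OF p_ball[OF t]]]]
    have "((\<lambda>t. F (?p t)) has_derivative (\<lambda>h. F' (?p t) (h *\<^sub>R e))) (at t within {0..1})" .
    then show ?thesis
      by (rule has_derivative_eq_rhs[OF has_derivative_diff[OF has_derivative_diff]])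
        (auto intro!: derivative_eq_intros simp: fun_eq_iff power2_eq_square blinfun.scaleR_right algebra_simps)
  qed
  moreover have "onorm (?g' t) \<le> L * norm e ^ 3" if t: "t \<in> {0..1}" for t
  proof (rule onorm_bound)
    have p_near: "norm (?p t - a) \<le> norm e"
      using t by (auto simp: mult_left_le_one_le)
    have "F' (?p t) e - F' a e - t *\<^sub>R F'' a e e = (F' (?p t) - F' a - F'' a (?p t - a)) e"
      by (simp add: blinfun.diff_left blinfun.scaleR_left blinfun.scaleR_right)
    also have "norm \<dots> \<le> norm (F' (?p t) - F' a - F'' a (?p t - a)) * norm e"
      by (rule norm_blinfun)
    also have "\<dots> \<le> (L * (norm (?p t - a))\<^sup>2) * norm e"
      using lipschitz_derivative_remainder[where F = F' and F' = F'', OF deriv2 lip L p_ball[OF t]] norm_ge_zero[of e]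
      by (rule mult_right_mono)
    also have "\<dots> \<le> (L * (norm e)\<^sup>2) * norm e"
      using p_near L by (intro mult_right_mono mult_left_mono power_mono) auto
    finally have bound: "norm (F' (?p t) e - F' a e - t *\<^sub>R F'' a e e) \<le> L * norm e ^ 3"
      by (simp add: power3_eq_cube power2_eq_square mult_ac)
    show "norm (?g' t h) \<le> L * norm e ^ 3 * norm h" for h
      using mult_left_mono[OF bound abs_ge_zero[of h]] by (simp add: mult_ac)
  qed (use L in simp)
  ultimately have "norm (?g 1 - ?g 0) \<le> L * norm e ^ 3 * norm (1 - 0::real)"
    by (intro differentiable_bound[OF convex_real_interval(5)]) auto
  then show ?thesis
    by (simp add: e_def blinfun.zero_left blinfun.zero_right algebra_simps)
qed

lemma norm_blinfun_apply2:
  fixes B :: "'a::real_normed_vector \<Rightarrow>\<^sub>L 'b::real_normed_vector \<Rightarrow>\<^sub>L 'c::real_normed_vector"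
  shows "norm (B x y) \<le> norm B * norm x * norm y"
proof -
  have "norm (B x y) \<le> norm (B x) * norm y"
    by (rule norm_blinfun)
  also have "\<dots> \<le> norm B * norm x * norm y"
    by (rule mult_right_mono[OF norm_blinfun]) simp
  finally show ?thesis .
qed

lemma bij_if_bounded_below:
  fixes T :: "'a::euclidean_space \<Rightarrow>\<^sub>L 'a"
  assumes "\<And>v. norm v \<le> C * norm (T v)"
  shows "bij T"
proof (rule bijI)
  show "inj T"
  proof (rule injI)
    fix a b assume "T a = T b"
    then show "a = b"
      using assms[of "a - b"] by (simp add: blinfun.diff_right)
  qed
  then show "surj T"
    using linear_inj_imp_surj blinfun.bounded_linear_right bounded_linear.linear by blast
qed

lemma line_complement_coordinate:
  fixes u :: "'a::real_vector"
  assumes X: "subspace X" and u: "u \<noteq> 0"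
    and disjoint: "span {u} \<inter> X = {0}"
    and spanning: "{a + b | a b. a \<in> span {u} \<and> b \<in> X} = UNIV"
  obtains \<psi> where "linear \<psi>" "\<psi> u = 1" "\<And>v. \<psi> v = 0 \<longleftrightarrow> v \<in> X"
    "\<And>v. proj_along (span {u}) X v = \<psi> v *\<^sub>R u"
proof -
  have ex: "\<exists>k. v - k *\<^sub>R u \<in> X" for v
  proof -
    obtain a b where "v = a + b" "a \<in> span {u}" "b \<in> X"
      using spanning by blast
    moreover from \<open>a \<in> span {u}\<close> obtain k where "a = k *\<^sub>R u"
      by (auto simp: span_singleton)
    ultimately show ?thesis
      by (intro exI[of _ k]) simp
  qed
  have unique: "k = l" if "v - k *\<^sub>R u \<in> X" "v - l *\<^sub>R u \<in> X" for v k l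
  proof -
    have "(l - k) *\<^sub>R u \<in> X"
      using subspace_diff[OF X that] by (simp add: algebra_simps)
    moreover have "(l - k) *\<^sub>R u \<in> span {u}"
      by (simp add: span_base span_scale)
    ultimately have "(l - k) *\<^sub>R u = 0"
      using disjoint by blast
    then show ?thesis
      using u by simp
  qed
  define \<psi> where "\<psi> v = (THE k. v - k *\<^sub>R u \<in> X)" for v
  have \<psi>_in: "v - \<psi> v *\<^sub>R u \<in> X" for v
  proof -
    have "\<exists>!k. v - k *\<^sub>R u \<in> X"
      using ex unique by blast
    then show ?thesis
      unfolding \<psi>_def by (rule theI')
  qed
  have \<psi>_eq: "\<psi> v = k" if "v - k *\<^sub>R u \<in> X" for v k
    using unique[OF \<psi>_in that] .
  show thesis
  proof
    show "linear \<psi>"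
    proof
      show "\<psi> (v + w) = \<psi> v + \<psi> w" for v w
        using subspace_add[OF X \<psi>_in \<psi>_in, of v w] by (intro \<psi>_eq) (simp add: algebra_simps)
      show "\<psi> (k *\<^sub>R v) = k *\<^sub>R \<psi> v" for k v
        using subspace_scale[OF X \<psi>_in, of k v] by (intro \<psi>_eq) (simp add: algebra_simps)
    qed
    show "\<psi> u = 1"
      using subspace_0[OF X] by (intro \<psi>_eq) simp
    show "\<psi> v = 0 \<longleftrightarrow> v \<in> X" for v
      using \<psi>_in[of v] \<psi>_eq[of v 0] by auto
    show "proj_along (span {u}) X v = \<psi> v *\<^sub>R u" for v
      unfolding proj_along_def
    proof (rule the_equality)
      show "\<psi> v *\<^sub>R u \<in> span {u} \<and> v - \<psi> v *\<^sub>R u \<in> X"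
        using \<psi>_in by (simp add: span_base span_scale)
      show "p = \<psi> v *\<^sub>R u" if p: "p \<in> span {u} \<and> v - p \<in> X" for p
      proof -
        obtain k where "p = k *\<^sub>R u"
          using p by (auto simp: span_singleton)
        then show ?thesis
          using p \<psi>_eq[of v k] by simp
      qed
    qed
  qed
qed

lemma mult_le_if_le_divide_plus_one:
  fixes K t b :: real
  assumes "0 \<le> K" "0 < b" "t \<le> b / (K + 1)"
  shows "K * t \<le> b"
proof -
  have "K * t \<le> K * (b / (K + 1))"
    using assms(1,3) by (rule mult_left_mono[rotated])
  also have "\<dots> \<le> b"
    using assms(1,2) by (simp add: field_simps)
  finally show ?thesis .
qed

lemma abs_ratio_minus_half_le:
  fixes a b :: real
  assumes "b \<noteq> 0"
  shows "\<bar>\<bar>a\<bar> / \<bar>b\<bar> - 1/2\<bar> \<le> \<bar>a - b / 2\<bar> / \<bar>b\<bar>"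
proof -
  have "\<bar>a\<bar> / \<bar>b\<bar> - 1/2 = (\<bar>a\<bar> - \<bar>b / 2\<bar>) / \<bar>b\<bar>"
    using assms by (simp add: field_simps)
  then show ?thesis
    by (simp add: divide_right_mono abs_triangle_ineq3)
qed

lemma halving_parameters:
  fixes K r \<gamma> :: real
  assumes "0 \<le> K" "0 < r" "0 < \<gamma>"
  obtains g \<rho> where "0 < g" "g \<le> \<gamma>" "g \<le> 1/8" "0 < \<rho>" "\<rho> \<le> r"
    "K * (g + \<rho>) \<le> 1/8" "16 * K * \<rho> \<le> 3 * g"
proof
  define g where "g = min \<gamma> (1 / (16 * (K + 1)))"
  define \<rho> where "\<rho> = min r (g / (16 * (K + 1)))"
  have K_pos: "0 < K + 1"
    using assms by auto
  show "0 < g" "g \<le> \<gamma>" "0 < \<rho>" "\<rho> \<le> r"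
    using assms by (auto simp: g_def \<rho>_def)
  have "g \<le> 1 / (16 * (K + 1))"
    by (simp add: g_def)
  also have "\<dots> \<le> 1/8"
    using assms(1) by (simp add: field_simps)
  finally show "g \<le> 1/8" .
  have "K * g \<le> 1/16"
  proof -
    have "K * g \<le> K * (1 / (16 * (K + 1)))"
      using assms by (intro mult_left_mono) (auto simp: g_def)
    also have "\<dots> \<le> 1/16"
      using K_pos by (simp add: field_simps)
    finally show ?thesis .
  qed
  moreover have "K * \<rho> \<le> g / 16"
  proof -
    have "K * \<rho> \<le> K * (g / (16 * (K + 1)))"
      using assms by (intro mult_left_mono) (auto simp: \<rho>_def)
    also have "\<dots> \<le> g / 16"
      using K_pos \<open>0 < g\<close> by (simp add: field_simps mult_right_mono)
    finally show ?thesis .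
  qed
  ultimately show "K * (g + \<rho>) \<le> 1/8" "16 * K * \<rho> \<le> 3 * g"
    using \<open>g \<le> 1/8\<close> \<open>0 < g\<close> by (simp_all add: algebra_simps)
qed

(* A scalar model of one iteration: \<epsilon>, s and w stand for norm (x - xs), the coordinate of
   x - xs along the null direction and the norm of its range component; primes refer to the
   next iterate. *)
lemma halving_step:
  fixes \<epsilon> s w \<epsilon>' s' w' K g \<rho> :: real
  assumes geom: "0 \<le> \<epsilon>" "\<epsilon> \<le> \<bar>s\<bar> + w" "\<bar>s\<bar> \<le> \<epsilon> + w" "\<epsilon>' \<le> \<bar>s'\<bar> + w'"
    and small: "0 \<le> K" "0 < g" "g \<le> 1/8" "K * (g + \<rho>) \<le> 1/8" "16 * K * \<rho> \<le> 3 * g"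
    and cone: "\<epsilon> \<le> \<rho>" "w \<le> g * \<bar>s\<bar>"
    and step: "\<bar>s' - s / 2\<bar> \<le> K * (w + \<epsilon> * \<bar>s\<bar>)" "w' \<le> K * \<epsilon>\<^sup>2"
  shows "\<epsilon>' \<le> 6/7 * \<epsilon>" "3/8 * \<bar>s\<bar> \<le> \<bar>s'\<bar>" "w' \<le> g * \<bar>s'\<bar>"
proof -
  have gs: "g * \<bar>s\<bar> \<le> \<bar>s\<bar> / 8"
    using mult_right_mono[OF small(3) abs_ge_zero[of s]] by simp
  have s_le: "\<bar>s\<bar> \<le> 8/7 * \<epsilon>" and eps_le: "\<epsilon> \<le> 2 * \<bar>s\<bar>"
    using geom(2,3) cone(2) gs by linarith+
  have "K * (w + \<epsilon> * \<bar>s\<bar>) \<le> K * ((g + \<rho>) * \<bar>s\<bar>)"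
    using cone mult_right_mono[OF cone(1) abs_ge_zero[of s]] small(1)
    by (intro mult_left_mono) (simp_all add: algebra_simps)
  also have "\<dots> \<le> \<bar>s\<bar> / 8"
    using mult_right_mono[OF small(4) abs_ge_zero[of s]] by (simp add: mult.assoc)
  finally have s'_near: "\<bar>s' - s / 2\<bar> \<le> \<bar>s\<bar> / 8"
    using step(1) by linarith
  then show "3/8 * \<bar>s\<bar> \<le> \<bar>s'\<bar>"
    by linarith
  have "w' \<le> K * \<rho> * \<epsilon>"
    using step(2) mult_left_mono[OF mult_right_mono[OF cone(1) geom(1)] small(1)]
    by (simp add: power2_eq_square mult_ac)
  also have "\<dots> \<le> 3 * g / 16 * \<epsilon>"
    using mult_right_mono[OF small(5) geom(1)] by simp
  finally have w'_le: "w' \<le> 3 * g / 16 * \<epsilon>" .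
  have "\<epsilon>' \<le> 5/8 * \<bar>s\<bar> + 3 * g / 16 * \<epsilon>"
    using geom(4) s'_near w'_le by linarith
  moreover have "3 * g / 16 * \<epsilon> \<le> 1/16 * \<epsilon>"
    using small(3) geom(1) by (intro mult_right_mono) auto
  ultimately show "\<epsilon>' \<le> 6/7 * \<epsilon>"
    using s_le by linarith
  note w'_le
  also have "3 * g / 16 * \<epsilon> \<le> 3 * g / 16 * (2 * \<bar>s\<bar>)"
    using eps_le small(2) by (intro mult_left_mono) auto
  also have "\<dots> = g * (3/8 * \<bar>s\<bar>)"
    by simp
  also have "\<dots> \<le> g * \<bar>s'\<bar>"
    using \<open>3/8 * \<bar>s\<bar> \<le> \<bar>s'\<bar>\<close> small(2) by (intro mult_left_mono) auto
  finally show "w' \<le> g * \<bar>s'\<bar>" .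
qed

lemma halving_invariant:
  fixes \<epsilon> s w :: "nat \<Rightarrow> real"
  assumes geom: "\<And>j. 0 \<le> \<epsilon> j" "\<And>j. \<epsilon> j \<le> \<bar>s j\<bar> + w j" "\<And>j. \<bar>s j\<bar> \<le> \<epsilon> j + w j"
    and small: "0 \<le> K" "0 < g" "g \<le> 1/8" "K * (g + \<rho>) \<le> 1/8" "16 * K * \<rho> \<le> 3 * g"
    and step: "\<And>j. \<epsilon> j \<le> \<rho> \<Longrightarrow> s j \<noteq> 0 \<Longrightarrow> w j \<le> g * \<bar>s j\<bar> \<Longrightarrow>
      \<bar>s (Suc j) - s j / 2\<bar> \<le> K * (w j + \<epsilon> j * \<bar>s j\<bar>) \<and> w (Suc j) \<le> K * (\<epsilon> j)\<^sup>2"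
    and init: "\<epsilon> 0 \<le> \<rho>" "s 0 \<noteq> 0" "w 0 \<le> g * \<bar>s 0\<bar>"
  shows "\<epsilon> j \<le> (6/7)^j * \<epsilon> 0 \<and> \<epsilon> j \<le> \<rho> \<and> s j \<noteq> 0 \<and> w j \<le> g * \<bar>s j\<bar>"
proof (induction j)
  case 0
  then show ?case using init by simp
next
  case (Suc j)
  then have "\<epsilon> j \<le> \<rho>" "s j \<noteq> 0" "w j \<le> g * \<bar>s j\<bar>"
    by auto
  note next_step = halving_step[OF geom(1,2,3) geom(2)[of "Suc j"] small this(1,3)
      step[OF this, THEN conjunct1] step[OF this, THEN conjunct2]]
  have "(6/7::real) ^ Suc j \<le> 1"
    by (rule power_le_one) auto
  then have "(6/7) ^ Suc j * \<epsilon> 0 \<le> \<epsilon> 0"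
    using geom(1)[of 0] by (intro mult_left_le_one_le) auto
  moreover have "\<epsilon> (Suc j) \<le> 6/7 * ((6/7)^j * \<epsilon> 0)"
    using next_step(1) Suc.IH by linarith
  moreover have "s (Suc j) \<noteq> 0"
    using next_step(2) \<open>s j \<noteq> 0\<close> by auto
  ultimately show ?case
    using next_step(3) init(1) by simp
qed

lemma halving_ratio_deviation:
  fixes s s' w \<eta> \<epsilon> K :: real
  assumes "s \<noteq> 0" "0 \<le> K" "0 \<le> \<epsilon>"
    and "\<bar>s' - s / 2\<bar> \<le> K * (w + \<eta> * \<bar>s\<bar>)" "w \<le> K * \<epsilon>\<^sup>2" "\<epsilon> \<le> 16/3 * \<bar>s\<bar>" "\<eta> \<le> \<epsilon>"
  shows "\<bar>\<bar>s'\<bar> / \<bar>s\<bar> - 1/2\<bar> \<le> K * (16/3 * K + 1) * \<epsilon>"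
proof -
  have "w \<le> K * \<epsilon> * (16/3 * \<bar>s\<bar>)"
    using assms(5) mult_left_mono[OF assms(6) mult_nonneg_nonneg[OF assms(2,3)]]
    by (simp add: power2_eq_square mult_ac)
  then have "w / \<bar>s\<bar> \<le> 16/3 * K * \<epsilon>"
    using assms(1) by (simp add: field_simps)
  moreover have "(16/3 * K + 1) * \<epsilon> = 16/3 * K * \<epsilon> + \<epsilon>"
    by (simp add: algebra_simps)
  ultimately have "w / \<bar>s\<bar> + \<eta> \<le> (16/3 * K + 1) * \<epsilon>"
    using assms(7) by linarith
  have "\<bar>\<bar>s'\<bar> / \<bar>s\<bar> - 1/2\<bar> \<le> \<bar>s' - s / 2\<bar> / \<bar>s\<bar>"
    using assms(1) by (rule abs_ratio_minus_half_le)
  also have "\<dots> \<le> K * (w / \<bar>s\<bar> + \<eta>)"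
    using assms(1,4) by (simp add: divide_right_mono field_simps)
  also have "\<dots> \<le> K * ((16/3 * K + 1) * \<epsilon>)"
    using \<open>w / \<bar>s\<bar> + \<eta> \<le> _\<close> assms(2) by (rule mult_left_mono)
  finally show ?thesis
    by (simp add: mult_ac)
qed

lemma halving_iteration:
  fixes \<epsilon> s w :: "nat \<Rightarrow> real"
  assumes geom: "\<And>j. 0 \<le> \<epsilon> j" "\<And>j. \<epsilon> j \<le> \<bar>s j\<bar> + w j" "\<And>j. \<bar>s j\<bar> \<le> \<epsilon> j + w j"
    and small: "0 \<le> K" "0 < g" "g \<le> 1/8" "K * (g + \<rho>) \<le> 1/8" "16 * K * \<rho> \<le> 3 * g"
    and step: "\<And>j. \<epsilon> j \<le> \<rho> \<Longrightarrow> s j \<noteq> 0 \<Longrightarrow> w j \<le> g * \<bar>s j\<bar> \<Longrightarrow>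
      \<bar>s (Suc j) - s j / 2\<bar> \<le> K * (w j + \<epsilon> j * \<bar>s j\<bar>) \<and> w (Suc j) \<le> K * (\<epsilon> j)\<^sup>2"
    and init: "\<epsilon> 0 \<le> \<rho>" "s 0 \<noteq> 0" "w 0 \<le> g * \<bar>s 0\<bar>"
  shows "\<epsilon> \<longlonglongrightarrow> 0" and "\<And>j. w (Suc j) \<le> K * (\<epsilon> j)\<^sup>2"
    and "(\<lambda>j. \<bar>s (Suc j)\<bar> / \<bar>s j\<bar>) \<longlonglongrightarrow> 1/2"
proof -
  have inv: "\<epsilon> j \<le> (6/7)^j * \<epsilon> 0 \<and> \<epsilon> j \<le> \<rho> \<and> s j \<noteq> 0 \<and> w j \<le> g * \<bar>s j\<bar>" for j
    by (rule halving_invariant) (fact geom small step init)+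
  then have in_cone: "\<epsilon> j \<le> \<rho>" "s j \<noteq> 0" "w j \<le> g * \<bar>s j\<bar>" for j
    by simp_all
  note step_j = step[OF in_cone]
  have next_step: "\<epsilon> (Suc j) \<le> 6/7 * \<epsilon> j" "3/8 * \<bar>s j\<bar> \<le> \<bar>s (Suc j)\<bar>" for j
    using halving_step[OF geom(1,2,3)[of j] geom(2)[of "Suc j"] small in_cone(1,3)[of j]
        step_j[of j, THEN conjunct1] step_j[of j, THEN conjunct2]] by simp_all
  show "w (Suc j) \<le> K * (\<epsilon> j)\<^sup>2" for j
    using step_j[of j] by simp
  show "\<epsilon> \<longlonglongrightarrow> 0"
  proof (rule Lim_null_comparison)
    show "\<forall>\<^sub>F j in sequentially. norm (\<epsilon> j) \<le> (6/7)^j * \<epsilon> 0"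
      using inv geom(1) by simp
  qed (rule tendsto_mult_left_zero[OF LIMSEQ_power_zero]; simp)
  have eps_s: "\<epsilon> j \<le> 16/3 * \<bar>s (Suc j)\<bar>" for j
    using geom(2)[of j] in_cone(3)[of j] mult_right_mono[OF small(3) abs_ge_zero[of "s j"]] next_step(2)[of j]
    by linarith
  have ratio_dev: "\<bar>\<bar>s (Suc (Suc j))\<bar> / \<bar>s (Suc j)\<bar> - 1/2\<bar> \<le> K * (16/3 * K + 1) * \<epsilon> j" for j
  proof (rule halving_ratio_deviation[where w = "w (Suc j)" and \<eta> = "\<epsilon> (Suc j)"])
    show "\<epsilon> (Suc j) \<le> \<epsilon> j"
      using next_step(1)[of j] geom(1)[of j] by linarith
  qed (fact in_cone(2) step_j[THEN conjunct1] step_j[THEN conjunct2] eps_s geom(1) small(1))+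
  have "(\<lambda>j. \<bar>s (Suc (Suc j))\<bar> / \<bar>s (Suc j)\<bar> - 1/2) \<longlonglongrightarrow> 0"
  proof (rule Lim_null_comparison[OF always_eventually])
    show "\<forall>j. norm (\<bar>s (Suc (Suc j))\<bar> / \<bar>s (Suc j)\<bar> - 1/2) \<le> K * (16/3 * K + 1) * \<epsilon> j"
      using ratio_dev by simp
    show "(\<lambda>j. K * (16/3 * K + 1) * \<epsilon> j) \<longlonglongrightarrow> 0"
      by (rule tendsto_mult_right_zero) fact
  qed
  then have "(\<lambda>j. \<bar>s (Suc (Suc j))\<bar> / \<bar>s (Suc j)\<bar>) \<longlonglongrightarrow> 1/2"
    by (rule LIM_zero_cancel)
  then show "(\<lambda>j. \<bar>s (Suc j)\<bar> / \<bar>s j\<bar>) \<longlonglongrightarrow> 1/2"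
    by (rule LIMSEQ_imp_Suc)
qed

(* \<phi> is a unit vector spanning the null space of J xs and \<psi> is the coordinate along \<phi> of the
   projection onto the null space along the range, so PN and PX below are P_N and P_X. *)
locale simple_singular_root =
  fixes f :: "'a::euclidean_space \<Rightarrow> 'a" and J :: "'a \<Rightarrow> 'a \<Rightarrow>\<^sub>L 'a"
    and H :: "'a \<Rightarrow> 'a \<Rightarrow>\<^sub>L 'a \<Rightarrow>\<^sub>L 'a"
    and xs :: 'a and \<delta> L :: real and \<phi> :: 'a and \<psi> :: "'a \<Rightarrow> real" and \<alpha> :: real
  assumes delta_pos: "0 < \<delta>"
    and f_deriv: "\<And>x. x \<in> ball xs \<delta> \<Longrightarrow> (f has_derivative J x) (at x)"
    and J_deriv: "\<And>x. x \<in> ball xs \<delta> \<Longrightarrow> (J has_derivative H x) (at x)"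
    and H_lipschitz: "\<And>x y. x \<in> ball xs \<delta> \<Longrightarrow> y \<in> ball xs \<delta> \<Longrightarrow> norm (H x - H y) \<le> L * norm (x - y)"
    and root: "f xs = 0"
    and psi_linear: "bounded_linear \<psi>"
    and phi_unit: "norm \<phi> = 1"
    and psi_phi: "\<psi> \<phi> = 1"
    and J_phi: "J xs \<phi> = 0"
    and psi_J: "\<And>v. \<psi> (J xs v) = 0"
    and alpha_pos: "0 < \<alpha>"
    and J_bounded_below: "\<And>v. \<psi> v = 0 \<Longrightarrow> \<alpha> * norm v \<le> norm (J xs v)"
    and nondegenerate: "\<psi> (H xs \<phi> \<phi>) \<noteq> 0"
begin

sublocale psi: bounded_linear \<psi>
  by (rule psi_linear)

definition PN :: "'a \<Rightarrow> 'a" where "PN v = \<psi> v *\<^sub>R \<phi>"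

definition PX :: "'a \<Rightarrow> 'a" where "PX v = v - PN v"

abbreviation "\<beta> \<equiv> \<psi> (H xs \<phi> \<phi>)"

abbreviation "C\<psi> \<equiv> onorm \<psi>"

abbreviation "MA \<equiv> norm (J xs)"

abbreviation "MB \<equiv> norm (H xs)"

lemma abs_psi_le: "\<bar>\<psi> v\<bar> \<le> C\<psi> * norm v"
  using onorm[OF psi_linear, of v] by simp

lemma Cpsi_nonneg: "0 \<le> C\<psi>"
  by (rule onorm_pos_le[OF psi_linear])

definition \<kappa> :: real where "\<kappa> = C\<psi> / \<bar>\<beta>\<bar>"

lemma kappa_nonneg: "0 \<le> \<kappa>"
  by (simp add: \<kappa>_def Cpsi_nonneg)

lemma psi_PX [simp]: "\<psi> (PX v) = 0"
  by (simp add: PX_def PN_def psi.diff psi.scaleR psi_phi)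

lemma J_PX [simp]: "J xs (PX v) = J xs v"
  by (simp add: PX_def PN_def blinfun.diff_right blinfun.scaleR_right J_phi)

lemma PX_decomp: "v = \<psi> v *\<^sub>R \<phi> + PX v"
  by (simp add: PX_def PN_def)

lemma PX_diff_scaleR_phi: "PX (v - k *\<^sub>R \<phi>) = PX v"
  by (simp add: PX_def PN_def psi.diff psi.scaleR psi_phi algebra_simps)

lemma norm_PN [simp]: "norm (PN v) = \<bar>\<psi> v\<bar>"
  by (simp add: PN_def phi_unit)

lemma norm_le_psi_plus_PX: "norm v \<le> \<bar>\<psi> v\<bar> + norm (PX v)"
  using norm_triangle_ineq[of "\<psi> v *\<^sub>R \<phi>" "PX v"] by (simp add: phi_unit flip: PX_decomp)

lemma abs_psi_le_norm_plus_PX: "\<bar>\<psi> v\<bar> \<le> norm v + norm (PX v)"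
  using norm_triangle_ineq4[of v "PX v"] by (simp add: PX_def PN_def phi_unit)

lemma L_nonneg: "0 \<le> L"
proof -
  let ?y = "xs + (\<delta> / 2) *\<^sub>R \<phi>"
  have "?y \<in> ball xs \<delta>" "xs \<in> ball xs \<delta>"
    using delta_pos by (simp_all add: dist_norm phi_unit)
  then have "norm (H ?y - H xs) \<le> L * (\<delta> / 2)"
    using H_lipschitz[of ?y xs] delta_pos by (simp add: phi_unit)
  then have "0 \<le> L * (\<delta> / 2)"
    using norm_ge_zero order_trans by blast
  then show ?thesis
    using delta_pos by (simp add: zero_le_mult_iff)
qed

lemma jacobian_expansion:
  "x \<in> ball xs \<delta> \<Longrightarrow> norm (J x - J xs - H xs (x - xs)) \<le> L * (norm (x - xs))\<^sup>2"
  by (rule lipschitz_derivative_remainder[where F = J and F' = H, OF J_deriv H_lipschitz L_nonneg])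

lemma residual_expansion:
  assumes "x \<in> ball xs \<delta>"
  shows "norm (f x - J xs (x - xs) - (1/2) *\<^sub>R H xs (x - xs) (x - xs)) \<le> L * (norm (x - xs))^3"
  using lipschitz_second_derivative_taylor[where F = f and F' = J and F'' = H and a = xs and r = \<delta>,
      OF f_deriv J_deriv H_lipschitz L_nonneg assms] root by simp

lemma abs_psi_H_le: "\<bar>\<psi> (H xs p q)\<bar> \<le> C\<psi> * MB * norm p * norm q"
  using order_trans[OF abs_psi_le mult_left_mono[OF norm_blinfun_apply2 Cpsi_nonneg]]
  by (simp add: mult_ac)

lemma range_component_estimate:
  assumes x: "x \<in> ball xs \<delta>" "norm (x - xs) \<le> 1"
  shows "\<alpha> * norm (PX v) \<le> norm (J x v) + (MB + L) * norm (x - xs) * norm v"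
proof -
  define \<epsilon> where "\<epsilon> = norm (x - xs)"
  define R where "R = J x - J xs - H xs (x - xs)"
  have eq: "J xs (PX v) = J x v - H xs (x - xs) v - R v"
    by (simp add: R_def blinfun.diff_left)
  have "norm (J xs (PX v)) \<le> norm (J x v) + norm (H xs (x - xs) v) + norm (R v)"
    unfolding eq
    using norm_triangle_ineq4[of "J x v - H xs (x - xs) v" "R v"] norm_triangle_ineq4[of "J x v" "H xs (x - xs) v"]
    by linarith
  moreover have "\<alpha> * norm (PX v) \<le> norm (J xs (PX v))"
    by (rule J_bounded_below) simp
  moreover have "norm (H xs (x - xs) v) \<le> MB * \<epsilon> * norm v"
    unfolding \<epsilon>_def by (rule norm_blinfun_apply2)
  moreover have "norm (R v) \<le> L * \<epsilon> * norm v"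
  proof -
    have "norm (R v) \<le> L * \<epsilon>\<^sup>2 * norm v"
      using order_trans[OF norm_blinfun mult_right_mono[OF jacobian_expansion[OF x(1)] norm_ge_zero]]
      by (simp add: R_def \<epsilon>_def)
    also have "\<dots> \<le> L * \<epsilon> * norm v"
      using x(2) L_nonneg
      by (intro mult_right_mono mult_left_mono) (auto simp: \<epsilon>_def power2_eq_square mult_left_le_one_le)
    finally show ?thesis .
  qed
  moreover have "(MB + L) * \<epsilon> * norm v = MB * \<epsilon> * norm v + L * \<epsilon> * norm v"
    by (simp add: algebra_simps)
  ultimately show ?thesis
    unfolding \<epsilon>_def by linarith
qed

lemma null_component_estimate:
  assumes x: "x \<in> ball xs \<delta>"
  shows "\<bar>\<psi> (x - xs)\<bar> * \<bar>\<psi> v\<bar> * \<bar>\<beta>\<bar>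
    \<le> C\<psi> * norm (J x v) + C\<psi> * MB * \<bar>\<psi> (x - xs)\<bar> * norm (PX v)
      + C\<psi> * (MB * norm (PX (x - xs)) + L * (norm (x - xs))\<^sup>2) * norm v"
proof -
  define e where "e = x - xs"
  define R where "R = J x - J xs - H xs e"
  have He: "H xs e = \<psi> e *\<^sub>R H xs \<phi> + H xs (PX e)"
    using arg_cong[OF PX_decomp[of e], of "H xs"] by (simp add: blinfun.bilinear_simps)
  have Hv: "H xs \<phi> v = \<psi> v *\<^sub>R H xs \<phi> \<phi> + H xs \<phi> (PX v)"
    using arg_cong[OF PX_decomp[of v], of "H xs \<phi>"] by (simp add: blinfun.bilinear_simps)
  have "J x v = J xs v + H xs e v + R v"
    by (simp add: R_def blinfun.diff_left)
  then have "\<psi> (J x v) = \<psi> e * \<psi> v * \<beta> + \<psi> e * \<psi> (H xs \<phi> (PX v)) + \<psi> (H xs (PX e) v) + \<psi> (R v)"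
    by (simp add: He Hv blinfun.add_left blinfun.scaleR_left psi.add psi.scaleR psi_J ring_distribs)
  then have "\<bar>\<psi> e\<bar> * \<bar>\<psi> v\<bar> * \<bar>\<beta>\<bar>
      \<le> \<bar>\<psi> (J x v)\<bar> + \<bar>\<psi> e\<bar> * \<bar>\<psi> (H xs \<phi> (PX v))\<bar> + \<bar>\<psi> (H xs (PX e) v)\<bar> + \<bar>\<psi> (R v)\<bar>"
    unfolding abs_mult[symmetric] by arith
  moreover have "\<bar>\<psi> (J x v)\<bar> \<le> C\<psi> * norm (J x v)"
    by (rule abs_psi_le)
  moreover have "\<bar>\<psi> e\<bar> * \<bar>\<psi> (H xs \<phi> (PX v))\<bar> \<le> C\<psi> * MB * \<bar>\<psi> e\<bar> * norm (PX v)"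
    using mult_left_mono[OF abs_psi_H_le[of \<phi> "PX v"] abs_ge_zero[of "\<psi> e"]] by (simp add: phi_unit mult_ac)
  moreover have "\<bar>\<psi> (H xs (PX e) v)\<bar> \<le> C\<psi> * MB * norm (PX e) * norm v"
    by (rule abs_psi_H_le)
  moreover have "\<bar>\<psi> (R v)\<bar> \<le> C\<psi> * L * (norm e)\<^sup>2 * norm v"
    using order_trans[OF abs_psi_le mult_left_mono[OF order_trans[OF norm_blinfun
          mult_right_mono[OF jacobian_expansion[OF x] norm_ge_zero]] Cpsi_nonneg]]
    by (simp add: R_def e_def mult_ac)
  moreover have "C\<psi> * (MB * norm (PX e) + L * (norm e)\<^sup>2) * norm v
      = C\<psi> * MB * norm (PX e) * norm v + C\<psi> * L * (norm e)\<^sup>2 * norm v"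
    by (simp add: algebra_simps)
  ultimately show ?thesis
    unfolding e_def by linarith
qed

definition wedge :: "real \<Rightarrow> real \<Rightarrow> 'a set" where
  "wedge r \<gamma> = {x. norm (x - xs) \<le> r \<and> \<psi> (x - xs) \<noteq> 0 \<and> norm (PX (x - xs)) \<le> \<gamma> * \<bar>\<psi> (x - xs)\<bar>}"

lemma wedge_norm_le:
  assumes "x \<in> wedge r \<gamma>" "\<gamma> \<le> 1"
  shows "norm (x - xs) \<le> 2 * \<bar>\<psi> (x - xs)\<bar>"
proof -
  have "norm (PX (x - xs)) \<le> \<gamma> * \<bar>\<psi> (x - xs)\<bar>"
    using assms(1) by (simp add: wedge_def)
  then show ?thesis
    using norm_le_psi_plus_PX[of "x - xs"] mult_right_mono[OF assms(2) abs_ge_zero[of "\<psi> (x - xs)"]]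
    by linarith
qed

lemma wedge_subset_ball: "r < \<delta> \<Longrightarrow> x \<in> wedge r \<gamma> \<Longrightarrow> x \<in> ball xs \<delta>"
  by (simp add: wedge_def dist_norm norm_minus_commute)

lemma wedge_mono: "r \<le> r' \<Longrightarrow> \<gamma> \<le> \<gamma>' \<Longrightarrow> wedge r \<gamma> \<subseteq> wedge r' \<gamma>'"
  unfolding wedge_def by (auto intro: order_trans mult_right_mono)

lemma W_region_subset_wedge: "W_region PN xs \<rho> \<gamma> \<subseteq> wedge \<rho> \<gamma>"
proof
  fix x assume x: "x \<in> W_region PN xs \<rho> \<gamma>"
  then have PX_le: "norm (PX (x - xs)) \<le> \<gamma> * \<bar>\<psi> (x - xs)\<bar>"
    by (simp add: W_region_def PX_def)
  have "\<psi> (x - xs) \<noteq> 0"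
  proof
    assume "\<psi> (x - xs) = 0"
    then have "x - xs = 0"
      using PX_le PX_decomp[of "x - xs"] by simp
    then show False
      using x by (simp add: W_region_def)
  qed
  with x PX_le show "x \<in> wedge \<rho> \<gamma>"
    by (simp add: W_region_def wedge_def)
qed

definition Cinv :: real where "Cinv = 2 * (\<kappa> + (\<kappa> * MB + 1) * (C\<psi> / \<alpha>))"

definition CinvX :: real where "CinvX = (1 + 2 * (MB + L) * Cinv) / \<alpha>"

context
  fixes r \<gamma> :: real
  assumes r: "r \<le> 1" "r < \<delta>" and \<gamma>: "\<gamma> \<le> 1"
    and small: "(MB + L) * (\<kappa> * MB + 1) * r \<le> \<alpha> / 4" "\<kappa> * (MB * \<gamma> + 2 * L * r) \<le> 1/8"
begin

lemma null_coefficient_bound: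
  assumes x: "x \<in> wedge r \<gamma>"
  defines "s \<equiv> \<bar>\<psi> (x - xs)\<bar>"
  shows "\<bar>\<psi> v\<bar> * s \<le> \<kappa> * (norm (J x v) + MB * (norm (PX v) * s)) + norm v * s / 8"
proof -
  define \<epsilon> where "\<epsilon> = norm (x - xs)"
  define c where "c = MB * \<gamma> + 2 * L * r"
  have \<epsilon>: "\<epsilon> \<le> r" "\<epsilon> \<le> 2 * s" "0 \<le> \<epsilon>" and PX_le: "norm (PX (x - xs)) \<le> \<gamma> * s"
    using x wedge_norm_le[OF x \<gamma>] by (auto simp: wedge_def \<epsilon>_def s_def)
  have "MB * norm (PX (x - xs)) + L * \<epsilon>\<^sup>2 \<le> c * s"
  proof -
    have "\<epsilon>\<^sup>2 \<le> r * (2 * s)"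
      unfolding power2_eq_square using \<epsilon> by (intro mult_mono) auto
    then have "L * \<epsilon>\<^sup>2 \<le> L * (r * (2 * s))"
      using L_nonneg by (rule mult_left_mono)
    moreover have "MB * norm (PX (x - xs)) \<le> MB * (\<gamma> * s)"
      using PX_le by (simp add: mult_left_mono)
    ultimately show ?thesis
      by (simp add: c_def algebra_simps)
  qed
  then have "C\<psi> * (MB * norm (PX (x - xs)) + L * \<epsilon>\<^sup>2) * norm v \<le> C\<psi> * (c * s) * norm v"
    using Cpsi_nonneg by (intro mult_right_mono mult_left_mono) auto
  then have "\<bar>\<psi> v\<bar> * s * \<bar>\<beta>\<bar> \<le> C\<psi> * (norm (J x v) + MB * (norm (PX v) * s) + c * (norm v * s))"
    using null_component_estimate[OF wedge_subset_ball[OF r(2) x], of v]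
    by (simp add: s_def \<epsilon>_def algebra_simps)
  then have "\<bar>\<psi> v\<bar> * s \<le> \<kappa> * (norm (J x v) + MB * (norm (PX v) * s) + c * (norm v * s))"
    using nondegenerate by (simp add: \<kappa>_def pos_le_divide_eq)
  moreover have "\<kappa> * (c * (norm v * s)) \<le> norm v * s / 8"
    using mult_right_mono[OF small(2)[folded c_def], of "norm v * s"] by (simp add: s_def mult_ac)
  ultimately show ?thesis
    unfolding distrib_left by linarith
qed

lemma range_coefficient_bound:
  assumes x: "x \<in> wedge r \<gamma>"
  defines "s \<equiv> \<bar>\<psi> (x - xs)\<bar>"
  shows "(\<kappa> * MB + 1) * (norm (PX v) * s) \<le> (\<kappa> * MB + 1) * (C\<psi> / \<alpha>) * norm (J x v) + norm v * s / 4"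
proof -
  define \<epsilon> where "\<epsilon> = norm (x - xs)"
  have \<epsilon>: "\<epsilon> \<le> r" "0 \<le> \<epsilon>"
    using x by (auto simp: wedge_def \<epsilon>_def)
  have s_le: "s \<le> C\<psi>"
    using abs_psi_le[of "x - xs"] mult_left_mono[OF order_trans[OF \<epsilon>(1) r(1)] Cpsi_nonneg]
    by (simp add: s_def \<epsilon>_def)
  have "\<alpha> * norm (PX v) \<le> norm (J x v) + (MB + L) * \<epsilon> * norm v"
    using range_component_estimate[OF wedge_subset_ball[OF r(2) x]] \<epsilon> r by (simp add: \<epsilon>_def)
  then have "\<alpha> * (norm (PX v) * s) \<le> norm (J x v) * s + (MB + L) * \<epsilon> * (norm v * s)"
    using mult_right_mono[of _ _ s] by (force simp: s_def algebra_simps)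
  also have "\<dots> \<le> C\<psi> * norm (J x v) + (MB + L) * r * (norm v * s)"
  proof (rule add_mono)
    show "norm (J x v) * s \<le> C\<psi> * norm (J x v)"
      using mult_left_mono[OF s_le norm_ge_zero] by (simp add: mult.commute)
    show "(MB + L) * \<epsilon> * (norm v * s) \<le> (MB + L) * r * (norm v * s)"
      using \<epsilon>(1) L_nonneg by (intro mult_right_mono mult_left_mono) (auto simp: s_def)
  qed
  finally have "norm (PX v) * s \<le> (C\<psi> / \<alpha>) * norm (J x v) + ((MB + L) * r / \<alpha>) * (norm v * s)"
    using alpha_pos by (simp add: field_simps)
  then have "(\<kappa> * MB + 1) * (norm (PX v) * s)
      \<le> (\<kappa> * MB + 1) * ((C\<psi> / \<alpha>) * norm (J x v) + ((MB + L) * r / \<alpha>) * (norm v * s))"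
    using kappa_nonneg by (intro mult_left_mono) auto
  also have "\<dots> = (\<kappa> * MB + 1) * (C\<psi> / \<alpha>) * norm (J x v) + ((MB + L) * (\<kappa> * MB + 1) * r / \<alpha>) * (norm v * s)"
    using alpha_pos by (simp add: field_simps)
  finally have "(\<kappa> * MB + 1) * (norm (PX v) * s)
      \<le> (\<kappa> * MB + 1) * (C\<psi> / \<alpha>) * norm (J x v) + ((MB + L) * (\<kappa> * MB + 1) * r / \<alpha>) * (norm v * s)" .
  moreover have "(MB + L) * (\<kappa> * MB + 1) * r / \<alpha> * (norm v * s) \<le> 1/4 * (norm v * s)"
    using small(1) alpha_pos by (intro mult_right_mono) (auto simp: s_def)
  ultimately show ?thesis
    by linarith
qed

lemma jacobian_inverse_estimate:
  assumes x: "x \<in> wedge r \<gamma>"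
  shows "norm v * \<bar>\<psi> (x - xs)\<bar> \<le> Cinv * norm (J x v)"
proof -
  define s U R where "s = \<bar>\<psi> (x - xs)\<bar>" and "U = norm (PX v) * s" and "R = norm (J x v)"
  define P Q T X where "P = \<kappa> * (R + MB * U)" and "Q = (\<kappa> * MB + 1) * U"
    and "T = \<kappa> * R" and "X = (\<kappa> * MB + 1) * (C\<psi> / \<alpha>) * R"
  have "norm v * s \<le> \<bar>\<psi> v\<bar> * s + U"
    using mult_right_mono[OF norm_le_psi_plus_PX[of v] abs_ge_zero[of "\<psi> (x - xs)"]]
    by (simp add: U_def s_def algebra_simps)
  moreover have "\<bar>\<psi> v\<bar> * s \<le> P + norm v * s / 8"
    using null_coefficient_bound[OF x, of v] by (simp add: P_def U_def R_def s_def)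
  moreover have "Q \<le> X + norm v * s / 4"
    using range_coefficient_bound[OF x, of v] by (simp add: Q_def X_def U_def R_def s_def)
  moreover have "P + U = T + Q"
    by (simp add: P_def Q_def T_def algebra_simps)
  moreover have "0 \<le> T + X"
    using Cpsi_nonneg kappa_nonneg alpha_pos by (simp add: T_def X_def R_def)
  moreover have "Cinv * R = 2 * T + 2 * X"
    by (simp add: Cinv_def T_def X_def algebra_simps)
  ultimately have "norm v * s \<le> Cinv * R"
    by linarith
  then show ?thesis
    by (simp add: s_def R_def)
qed

lemma range_inverse_estimate:
  assumes x: "x \<in> wedge r \<gamma>"
  shows "norm (PX v) \<le> CinvX * norm (J x v)"
proof -
  have "\<alpha> * norm (PX v) \<le> norm (J x v) + (MB + L) * norm (x - xs) * norm v"
    using x r by (intro range_component_estimate wedge_subset_ball) (auto simp: wedge_def)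
  also have "\<dots> \<le> norm (J x v) + (MB + L) * (2 * \<bar>\<psi> (x - xs)\<bar>) * norm v"
    using wedge_norm_le[OF x \<gamma>] L_nonneg by (intro add_left_mono mult_right_mono mult_left_mono) auto
  also have "\<dots> = norm (J x v) + (MB + L) * 2 * (norm v * \<bar>\<psi> (x - xs)\<bar>)"
    by (simp add: mult_ac)
  also have "\<dots> \<le> norm (J x v) + (MB + L) * 2 * (Cinv * norm (J x v))"
    using jacobian_inverse_estimate[OF x] L_nonneg by (intro add_left_mono mult_left_mono) auto
  finally show ?thesis
    using alpha_pos by (simp add: CinvX_def field_simps)
qed

end

lemma Cinv_nonneg: "0 \<le> Cinv" and CinvX_nonneg: "0 \<le> CinvX"
  using kappa_nonneg Cpsi_nonneg alpha_pos L_nonneg by (simp_all add: Cinv_def CinvX_def)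

lemma wedge_jacobian_inverse:
  obtains r \<gamma> where "0 < r" "r < \<delta>" "r \<le> 1" "0 < \<gamma>" "\<gamma> \<le> 1"
    "\<And>x v. x \<in> wedge r \<gamma> \<Longrightarrow> norm v * \<bar>\<psi> (x - xs)\<bar> \<le> Cinv * norm (J x v)"
    "\<And>x v. x \<in> wedge r \<gamma> \<Longrightarrow> norm (PX v) \<le> CinvX * norm (J x v)"
proof -
  define K1 K2 K3 where "K1 = (MB + L) * (\<kappa> * MB + 1)" and "K2 = 2 * L * \<kappa>" and "K3 = \<kappa> * MB"
  define r where "r = min (min 1 (\<delta> / 2)) (min ((\<alpha> / 4) / (K1 + 1)) ((1/16) / (K2 + 1)))"
  define \<gamma> where "\<gamma> = min 1 ((1/16) / (K3 + 1))"
  have K: "0 \<le> K1" "0 \<le> K2" "0 \<le> K3"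
    using L_nonneg kappa_nonneg by (simp_all add: K1_def K2_def K3_def)
  have r: "0 < r" "r \<le> 1" "r < \<delta>" and \<gamma>: "0 < \<gamma>" "\<gamma> \<le> 1"
    using delta_pos alpha_pos K by (auto simp: r_def \<gamma>_def)
  have "K1 * r \<le> \<alpha> / 4"
    by (rule mult_le_if_le_divide_plus_one[of K1 "\<alpha> / 4" r]) (use K alpha_pos in \<open>auto simp: r_def\<close>)
  moreover have "K2 * r \<le> 1/16"
    by (rule mult_le_if_le_divide_plus_one[of K2 "1/16" r]) (use K in \<open>auto simp: r_def\<close>)
  moreover have "K3 * \<gamma> \<le> 1/16"
    by (rule mult_le_if_le_divide_plus_one[of K3 "1/16" \<gamma>]) (use K in \<open>auto simp: \<gamma>_def\<close>)
  ultimately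
  have small: "(MB + L) * (\<kappa> * MB + 1) * r \<le> \<alpha> / 4" "\<kappa> * (MB * \<gamma> + 2 * L * r) \<le> 1/8"
    by (simp_all add: K1_def K2_def K3_def algebra_simps)
  show thesis
  proof (rule that[OF r(1,3,2) \<gamma>])
    show "norm v * \<bar>\<psi> (x - xs)\<bar> \<le> Cinv * norm (J x v)" if "x \<in> wedge r \<gamma>" for x v
      by (rule jacobian_inverse_estimate[OF r(2,3) \<gamma>(2) small that])
    show "norm (PX v) \<le> CinvX * norm (J x v)" if "x \<in> wedge r \<gamma>" for x v
      by (rule range_inverse_estimate[OF r(2,3) \<gamma>(2) small that])
  qed
qed

lemma bij_jacobian_in_wedge:
  assumes "x \<in> wedge r \<gamma>" "\<And>v. norm v * \<bar>\<psi> (x - xs)\<bar> \<le> C * norm (J x v)"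
  shows "bij (J x)"
proof (rule bij_if_bounded_below)
  have "\<bar>\<psi> (x - xs)\<bar> > 0"
    using assms(1) by (simp add: wedge_def)
  then show "norm v \<le> C / \<bar>\<psi> (x - xs)\<bar> * norm (J x v)" for v
    using assms(2)[of v] by (simp add: field_simps)
qed

lemma half_step_defect_eq:
  fixes x :: 'a
  defines "e \<equiv> x - xs"
  shows "J x e - f x - (\<psi> e / 2) *\<^sub>R J x \<phi> = (1/2) *\<^sub>R H xs e (PX e)
    + (J x - J xs - H xs e) (e - (\<psi> e / 2) *\<^sub>R \<phi>) - (f x - J xs e - (1/2) *\<^sub>R H xs e e)"
proof -
  have half: "(1/2) *\<^sub>R z + (1/2) *\<^sub>R z = z" for z :: 'a
    by (simp flip: scaleR_add_left)
  show ?thesis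
    by (simp add: PX_def PN_def blinfun.bilinear_simps J_phi algebra_simps half)
qed

lemma half_step_defect_bound:
  assumes x: "x \<in> ball xs \<delta>" "norm (x - xs) \<le> 2 * \<bar>\<psi> (x - xs)\<bar>"
  defines "e \<equiv> x - xs"
  shows "norm (J x e - f x - (\<psi> e / 2) *\<^sub>R J x \<phi>)
    \<le> (MB + 9 * L) * (norm (PX e) + norm e * \<bar>\<psi> e\<bar>) * \<bar>\<psi> e\<bar>"
proof -
  define s \<epsilon> where "s = \<bar>\<psi> e\<bar>" and "\<epsilon> = norm e"
  have \<epsilon>: "0 \<le> \<epsilon>" "\<epsilon> \<le> 2 * s"
    using x(2) by (simp_all add: s_def \<epsilon>_def e_def)
  have "norm ((1/2) *\<^sub>R H xs e (PX e)) \<le> MB * norm (PX e) * s"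
  proof -
    have "norm ((1/2) *\<^sub>R H xs e (PX e)) \<le> (1/2) * (MB * \<epsilon> * norm (PX e))"
      using norm_blinfun_apply2[of "H xs" e "PX e"] by (simp add: \<epsilon>_def)
    also have "\<dots> \<le> (1/2) * (MB * (2 * s) * norm (PX e))"
      using \<epsilon> by (intro mult_left_mono mult_right_mono) auto
    finally show ?thesis
      by (simp add: mult_ac)
  qed
  moreover have "norm ((J x - J xs - H xs e) (e - (\<psi> e / 2) *\<^sub>R \<phi>)) \<le> 5 * L * (\<epsilon> * s) * s"
  proof -
    have "norm (e - (\<psi> e / 2) *\<^sub>R \<phi>) \<le> 5/2 * s"
      using norm_triangle_ineq4[of e "(\<psi> e / 2) *\<^sub>R \<phi>"] \<epsilon> by (simp add: phi_unit s_def \<epsilon>_def)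
    moreover have "norm (J x - J xs - H xs e) \<le> L * \<epsilon>\<^sup>2"
      using jacobian_expansion[OF x(1)] by (simp add: e_def \<epsilon>_def)
    ultimately have "norm (J x - J xs - H xs e) * norm (e - (\<psi> e / 2) *\<^sub>R \<phi>) \<le> L * \<epsilon>\<^sup>2 * (5/2 * s)"
      using L_nonneg by (intro mult_mono) auto
    then have "norm ((J x - J xs - H xs e) (e - (\<psi> e / 2) *\<^sub>R \<phi>)) \<le> L * \<epsilon>\<^sup>2 * (5/2 * s)"
      using norm_blinfun order_trans by blast
    also have "\<dots> \<le> L * (\<epsilon> * (2 * s)) * (5/2 * s)"
      using \<epsilon> L_nonneg
      by (intro mult_right_mono mult_left_mono) (auto simp: power2_eq_square s_def intro: mult_left_mono)
    finally show ?thesis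
      by (simp add: mult_ac)
  qed
  moreover have "norm (f x - J xs e - (1/2) *\<^sub>R H xs e e) \<le> 4 * L * (\<epsilon> * s) * s"
  proof -
    have "\<epsilon>\<^sup>2 \<le> (2 * s)\<^sup>2"
      using \<epsilon> by (intro power_mono) auto
    then have "\<epsilon> * \<epsilon>\<^sup>2 \<le> \<epsilon> * (2 * s)\<^sup>2"
      using \<epsilon>(1) by (rule mult_left_mono)
    then have "L * (\<epsilon> * \<epsilon>\<^sup>2) \<le> L * (\<epsilon> * (2 * s)\<^sup>2)"
      using L_nonneg by (rule mult_left_mono)
    then have "L * \<epsilon> ^ 3 \<le> L * (\<epsilon> * (2 * s)\<^sup>2)"
      by (simp add: power3_eq_cube power2_eq_square mult.assoc)
    then show ?thesis
      using residual_expansion[OF x(1)] by (simp add: e_def \<epsilon>_def power2_eq_square mult_ac)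
  qed
  moreover have "MB * norm (PX e) * s + 9 * L * (\<epsilon> * s) * s \<le> (MB + 9 * L) * (norm (PX e) + \<epsilon> * s) * s"
  proof -
    have "0 \<le> MB * (\<epsilon> * s) * s + 9 * L * norm (PX e) * s"
      using L_nonneg \<epsilon>(1) by (simp add: s_def)
    then show ?thesis
      by (simp add: algebra_simps)
  qed
  ultimately show ?thesis
    unfolding half_step_defect_eq[of x, folded e_def]
    using norm_triangle_ineq[of "(1/2) *\<^sub>R H xs e (PX e)" "(J x - J xs - H xs e) (e - (\<psi> e / 2) *\<^sub>R \<phi>)"]
      norm_triangle_ineq4[of "(1/2) *\<^sub>R H xs e (PX e) + (J x - J xs - H xs e) (e - (\<psi> e / 2) *\<^sub>R \<phi>)"
        "f x - J xs e - (1/2) *\<^sub>R H xs e e"]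
    by (simp add: s_def \<epsilon>_def)
qed

lemma residual_bound:
  assumes x: "x \<in> ball xs \<delta>" "norm (x - xs) \<le> 1" "norm (x - xs) \<le> 2 * \<bar>\<psi> (x - xs)\<bar>"
  defines "e \<equiv> x - xs"
  shows "norm (f x) \<le> (MA + MB + 2 * L) * (norm (PX e) + norm e * \<bar>\<psi> e\<bar>)"
proof -
  define s \<epsilon> where "s = \<bar>\<psi> e\<bar>" and "\<epsilon> = norm e"
  define a b d where "a = J xs (PX e)" and "b = (1/2) *\<^sub>R H xs e e" and "d = f x - J xs e - (1/2) *\<^sub>R H xs e e"
  have \<epsilon>: "0 \<le> \<epsilon>" "\<epsilon> \<le> 1" "\<epsilon> \<le> 2 * s"
    using x(2,3) by (simp_all add: s_def \<epsilon>_def e_def)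
  have fx: "f x = a + b + d"
    by (simp add: a_def b_def d_def)
  have "norm (f x) \<le> norm a + norm b + norm d"
    unfolding fx using norm_triangle_ineq[of "a + b" d] norm_triangle_ineq[of a b] by linarith
  moreover have "norm a \<le> MA * norm (PX e)"
    unfolding a_def by (rule norm_blinfun)
  moreover have "norm b \<le> MB / 2 * \<epsilon>\<^sup>2"
    using norm_blinfun_apply2[of "H xs" e e] by (simp add: b_def \<epsilon>_def power2_eq_square)
  moreover have "norm d \<le> L * \<epsilon>\<^sup>2"
    using residual_expansion[OF x(1)] mult_left_mono[OF power_decreasing[of 2 3 \<epsilon>] L_nonneg] \<epsilon>
    by (simp add: d_def e_def \<epsilon>_def)
  moreover have "MB / 2 * \<epsilon>\<^sup>2 + L * \<epsilon>\<^sup>2 \<le> (MB + 2 * L) * (\<epsilon> * s)"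
  proof -
    have "\<epsilon>\<^sup>2 \<le> \<epsilon> * (2 * s)"
      unfolding power2_eq_square using \<epsilon> by (intro mult_left_mono) auto
    from mult_left_mono[OF this, of "MB / 2 + L"] show ?thesis
      using L_nonneg by (simp add: algebra_simps)
  qed
  moreover have "MA * norm (PX e) + (MB + 2 * L) * (\<epsilon> * s) \<le> (MA + MB + 2 * L) * (norm (PX e) + \<epsilon> * s)"
    using L_nonneg \<epsilon>(1) by (simp add: algebra_simps s_def)
  ultimately have "norm (f x) \<le> (MA + MB + 2 * L) * (norm (PX e) + \<epsilon> * s)"
    by linarith
  then show ?thesis
    by (simp add: s_def \<epsilon>_def)
qed

(* y - xs - (\<psi> e / 2) *\<^sub>R \<phi> is the deviation of the new iterate from halving the null
   component of the error and removing its range component. *)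
lemma newton_correction_bound:
  assumes x: "x \<in> ball xs \<delta>" "norm (x - xs) \<le> 1" "norm (PX (x - xs)) \<le> \<bar>\<psi> (x - xs)\<bar>"
    and t: "norm (J x (y - x) + f x) \<le> c * (norm (f x))\<^sup>2"
  defines "e \<equiv> x - xs" and "D \<equiv> MB + 9 * L + 2 * \<bar>c\<bar> * (MA + MB + 2 * L)\<^sup>2"
  shows "norm (J x (y - xs - (\<psi> e / 2) *\<^sub>R \<phi>)) \<le> D * (norm (PX e) + norm e * \<bar>\<psi> e\<bar>) * \<bar>\<psi> e\<bar>"
proof -
  define s P KF where "s = \<bar>\<psi> e\<bar>" and "P = norm (PX e) + norm e * s" and "KF = MA + MB + 2 * L"
  define d where "d = J x e - f x - (\<psi> e / 2) *\<^sub>R J x \<phi>"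
  have \<epsilon>: "norm (x - xs) \<le> 2 * \<bar>\<psi> (x - xs)\<bar>"
    using norm_le_psi_plus_PX[of "x - xs"] x(3) by simp
  have P: "0 \<le> P" "P \<le> 2 * s"
    using x(2,3) mult_right_mono[OF x(2) abs_ge_zero[of "\<psi> e"]] by (simp_all add: P_def s_def e_def)
  have "J x (y - xs - (\<psi> e / 2) *\<^sub>R \<phi>) = d + (J x (y - x) + f x)"
    by (simp add: d_def e_def blinfun.bilinear_simps algebra_simps)
  then have "norm (J x (y - xs - (\<psi> e / 2) *\<^sub>R \<phi>)) \<le> norm d + norm (J x (y - x) + f x)"
    by (simp add: norm_triangle_ineq)
  moreover have "norm d \<le> (MB + 9 * L) * P * s"
    using half_step_defect_bound[OF x(1) \<epsilon>] by (simp add: d_def P_def s_def e_def)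
  moreover have "norm (J x (y - x) + f x) \<le> 2 * \<bar>c\<bar> * KF\<^sup>2 * P * s"
  proof -
    have "norm (f x) \<le> KF * P"
      using residual_bound[OF x(1,2) \<epsilon>] by (simp add: KF_def P_def s_def e_def)
    then have "(norm (f x))\<^sup>2 \<le> (KF * P)\<^sup>2"
      by (rule power_mono) simp
    then have "c * (norm (f x))\<^sup>2 \<le> \<bar>c\<bar> * (KF * P)\<^sup>2"
      by (meson abs_ge_self abs_ge_zero mult_mono zero_le_power2)
    also have "\<dots> = \<bar>c\<bar> * KF\<^sup>2 * (P * P)"
      by (simp add: power2_eq_square mult_ac)
    also have "\<dots> \<le> \<bar>c\<bar> * KF\<^sup>2 * (P * (2 * s))"
      using P by (intro mult_left_mono) auto
    finally show ?thesis
      using t by (simp add: mult_ac)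
  qed
  moreover have "D * P * s = (MB + 9 * L) * P * s + 2 * \<bar>c\<bar> * KF\<^sup>2 * P * s"
    by (simp add: D_def KF_def algebra_simps)
  ultimately have "norm (J x (y - xs - (\<psi> e / 2) *\<^sub>R \<phi>)) \<le> D * P * s"
    by linarith
  then show ?thesis
    by (simp add: P_def s_def)
qed

lemma newton_step_estimate:
  assumes x: "x \<in> ball xs \<delta>" "norm (x - xs) \<le> 1" "\<psi> (x - xs) \<noteq> 0" "norm (PX (x - xs)) \<le> \<bar>\<psi> (x - xs)\<bar>"
    and inv: "\<And>v. norm v * \<bar>\<psi> (x - xs)\<bar> \<le> C * norm (J x v)" "\<And>v. norm (PX v) \<le> C' * norm (J x v)"
    and C: "0 \<le> C" "0 \<le> C'"
    and t: "norm (J x (y - x) + f x) \<le> c * (norm (f x))\<^sup>2"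
  defines "e \<equiv> x - xs" and "D \<equiv> MB + 9 * L + 2 * \<bar>c\<bar> * (MA + MB + 2 * L)\<^sup>2"
  shows "\<bar>\<psi> (y - xs) - \<psi> e / 2\<bar> \<le> C\<psi> * C * D * (norm (PX e) + norm e * \<bar>\<psi> e\<bar>)"
    and "norm (PX (y - xs)) \<le> 2 * C' * D * C\<psi>\<^sup>2 * (norm e)\<^sup>2"
proof -
  define v s P where "v = y - xs - (\<psi> e / 2) *\<^sub>R \<phi>" and "s = \<bar>\<psi> e\<bar>" and "P = norm (PX e) + norm e * s"
  have s: "0 < s" "s \<le> C\<psi> * norm e"
    using x(3) abs_psi_le[of e] by (simp_all add: s_def e_def)
  have P: "P \<le> 2 * s"
    using x(2,4) mult_right_mono[OF x(2) abs_ge_zero[of "\<psi> e"]] by (simp add: P_def s_def e_def)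
  have Jv: "norm (J x v) \<le> D * P * s"
    using newton_correction_bound[OF x(1,2,4) t] by (simp add: v_def P_def s_def e_def D_def)
  have "0 \<le> D"
    using L_nonneg by (simp add: D_def)
  have "\<bar>\<psi> v\<bar> * s \<le> C\<psi> * (norm v * s)"
    using mult_right_mono[OF abs_psi_le[of v], of s] s by (simp add: mult_ac)
  also have "\<dots> \<le> C\<psi> * (C * (D * P * s))"
    using inv(1)[of v] mult_left_mono[OF Jv C(1)] Cpsi_nonneg
    by (intro mult_left_mono) (auto simp: s_def e_def)
  finally have "\<bar>\<psi> v\<bar> \<le> C\<psi> * C * D * P"
    using s by (simp add: mult_ac)
  then show "\<bar>\<psi> (y - xs) - \<psi> e / 2\<bar> \<le> C\<psi> * C * D * (norm (PX e) + norm e * \<bar>\<psi> e\<bar>)"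
    by (simp add: v_def P_def s_def psi.diff psi.scaleR psi_phi)
  have "norm (PX (y - xs)) \<le> C' * (D * P * s)"
    using inv(2)[of v] mult_left_mono[OF Jv C(2)] by (simp add: v_def PX_diff_scaleR_phi)
  also have "\<dots> \<le> C' * (D * (2 * s) * s)"
    using P s C(2) \<open>0 \<le> D\<close> by (intro mult_left_mono mult_right_mono) auto
  also have "\<dots> = 2 * C' * D * s\<^sup>2"
    by (simp add: power2_eq_square)
  also have "\<dots> \<le> 2 * C' * D * (C\<psi> * norm e)\<^sup>2"
    using s C(2) \<open>0 \<le> D\<close> by (intro mult_left_mono power_mono) auto
  finally show "norm (PX (y - xs)) \<le> 2 * C' * D * C\<psi>\<^sup>2 * (norm e)\<^sup>2"
    by (simp add: power_mult_distrib mult_ac)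
qed

lemma wedge_newton_step:
  obtains r \<gamma> K where "0 < r" "r < \<delta>" "0 < \<gamma>" "0 \<le> K"
    "\<And>x. x \<in> wedge r \<gamma> \<Longrightarrow> bij (J x)"
    "\<And>x y. x \<in> wedge r \<gamma> \<Longrightarrow> norm (J x (y - x) + f x) \<le> c * (norm (f x))\<^sup>2 \<Longrightarrow>
      \<bar>\<psi> (y - xs) - \<psi> (x - xs) / 2\<bar> \<le> K * (norm (PX (x - xs)) + norm (x - xs) * \<bar>\<psi> (x - xs)\<bar>)
      \<and> norm (PX (y - xs)) \<le> K * (norm (x - xs))\<^sup>2"
proof -
  obtain r \<gamma> where r: "0 < r" "r < \<delta>" "r \<le> 1" and \<gamma>: "0 < \<gamma>" "\<gamma> \<le> 1"
    and inv: "\<And>x v. x \<in> wedge r \<gamma> \<Longrightarrow> norm v * \<bar>\<psi> (x - xs)\<bar> \<le> Cinv * norm (J x v)"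
      "\<And>x v. x \<in> wedge r \<gamma> \<Longrightarrow> norm (PX v) \<le> CinvX * norm (J x v)"
    using wedge_jacobian_inverse by blast
  define D where "D = MB + 9 * L + 2 * \<bar>c\<bar> * (MA + MB + 2 * L)\<^sup>2"
  define K where "K = C\<psi> * Cinv * D + 2 * CinvX * D * C\<psi>\<^sup>2"
  have K_ge: "0 \<le> C\<psi> * Cinv * D" "0 \<le> 2 * CinvX * D * C\<psi>\<^sup>2"
    using Cpsi_nonneg Cinv_nonneg CinvX_nonneg L_nonneg by (simp_all add: D_def)
  show thesis
  proof (rule that[OF r(1,2) \<gamma>(1)])
    show "0 \<le> K"
      using K_ge by (simp add: K_def)
    show "bij (J x)" if "x \<in> wedge r \<gamma>" for x
      by (rule bij_jacobian_in_wedge[OF that inv(1)[OF that]])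
    fix x y
    assume x: "x \<in> wedge r \<gamma>" and t: "norm (J x (y - x) + f x) \<le> c * (norm (f x))\<^sup>2"
    have x': "norm (x - xs) \<le> r" "\<psi> (x - xs) \<noteq> 0" "norm (PX (x - xs)) \<le> \<gamma> * \<bar>\<psi> (x - xs)\<bar>"
      using x by (simp_all add: wedge_def)
    moreover have "norm (PX (x - xs)) \<le> \<bar>\<psi> (x - xs)\<bar>"
      using x'(3) mult_right_mono[OF \<gamma>(2) abs_ge_zero[of "\<psi> (x - xs)"]] by linarith
    ultimately have "x \<in> ball xs \<delta>" "norm (x - xs) \<le> 1" "\<psi> (x - xs) \<noteq> 0" "norm (PX (x - xs)) \<le> \<bar>\<psi> (x - xs)\<bar>"
      using r by (simp_all add: dist_norm norm_minus_commute)
    note est = newton_step_estimate[OF this inv[OF x] Cinv_nonneg CinvX_nonneg t, folded D_def]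
    have "C\<psi> * Cinv * D * (norm (PX (x - xs)) + norm (x - xs) * \<bar>\<psi> (x - xs)\<bar>)
        \<le> K * (norm (PX (x - xs)) + norm (x - xs) * \<bar>\<psi> (x - xs)\<bar>)"
      using K_ge by (intro mult_right_mono) (auto simp: K_def)
    moreover have "2 * CinvX * D * C\<psi>\<^sup>2 * (norm (x - xs))\<^sup>2 \<le> K * (norm (x - xs))\<^sup>2"
      using K_ge by (intro mult_right_mono) (auto simp: K_def)
    ultimately show "\<bar>\<psi> (y - xs) - \<psi> (x - xs) / 2\<bar> \<le> K * (norm (PX (x - xs)) + norm (x - xs) * \<bar>\<psi> (x - xs)\<bar>)
      \<and> norm (PX (y - xs)) \<le> K * (norm (x - xs))\<^sup>2"
      using est by linarith
  qed
qed

lemma wedge_iteration: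
  assumes small: "0 \<le> K" "0 < g" "g \<le> 1/8" "K * (g + \<rho>) \<le> 1/8" "16 * K * \<rho> \<le> 3 * g"
    and step: "\<And>j. x j \<in> wedge \<rho> g \<Longrightarrow>
      \<bar>\<psi> (x (Suc j) - xs) - \<psi> (x j - xs) / 2\<bar> \<le> K * (norm (PX (x j - xs)) + norm (x j - xs) * \<bar>\<psi> (x j - xs)\<bar>)
      \<and> norm (PX (x (Suc j) - xs)) \<le> K * (norm (x j - xs))\<^sup>2"
    and x0: "x 0 \<in> wedge \<rho> g"
  shows "x \<longlonglongrightarrow> xs" and "\<And>j. norm (PX (x (Suc j) - xs)) \<le> K * (norm (x j - xs))\<^sup>2"
    and "(\<lambda>j. \<bar>\<psi> (x (Suc j) - xs)\<bar> / \<bar>\<psi> (x j - xs)\<bar>) \<longlonglongrightarrow> 1/2"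
proof -
  define \<epsilon> s w where "\<epsilon> j = norm (x j - xs)" and "s j = \<psi> (x j - xs)" and "w j = norm (PX (x j - xs))" for j
  have geom: "0 \<le> \<epsilon> j" "\<epsilon> j \<le> \<bar>s j\<bar> + w j" "\<bar>s j\<bar> \<le> \<epsilon> j + w j" for j
    by (simp_all add: \<epsilon>_def s_def w_def norm_le_psi_plus_PX abs_psi_le_norm_plus_PX)
  have step': "\<bar>s (Suc j) - s j / 2\<bar> \<le> K * (w j + \<epsilon> j * \<bar>s j\<bar>) \<and> w (Suc j) \<le> K * (\<epsilon> j)\<^sup>2"
    if "\<epsilon> j \<le> \<rho>" "s j \<noteq> 0" "w j \<le> g * \<bar>s j\<bar>" for j
    using that step[of j] by (simp add: \<epsilon>_def s_def w_def wedge_def)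
  have init: "\<epsilon> 0 \<le> \<rho>" "s 0 \<noteq> 0" "w 0 \<le> g * \<bar>s 0\<bar>"
    using x0 by (simp_all add: \<epsilon>_def s_def w_def wedge_def)
  have "\<epsilon> \<longlonglongrightarrow> 0" "\<And>j. w (Suc j) \<le> K * (\<epsilon> j)\<^sup>2" "(\<lambda>j. \<bar>s (Suc j)\<bar> / \<bar>s j\<bar>) \<longlonglongrightarrow> 1/2"
    by (rule halving_iteration; fact geom small step' init)+
  then show "\<And>j. norm (PX (x (Suc j) - xs)) \<le> K * (norm (x j - xs))\<^sup>2"
    "(\<lambda>j. \<bar>\<psi> (x (Suc j) - xs)\<bar> / \<bar>\<psi> (x j - xs)\<bar>) \<longlonglongrightarrow> 1/2"
    by (simp_all add: \<epsilon>_def s_def w_def)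
  from \<open>\<epsilon> \<longlonglongrightarrow> 0\<close> show "x \<longlonglongrightarrow> xs"
    by (simp add: \<epsilon>_def[abs_def] tendsto_norm_zero_iff LIM_zero_iff)
qed

lemma local_convergence:
  "\<exists>\<rho>0>0. \<exists>\<gamma>0>0. \<forall>\<rho> \<gamma>. 0 < \<rho> \<and> \<rho> \<le> \<rho>0 \<and> 0 < \<gamma> \<and> \<gamma> \<le> \<gamma>0 \<longrightarrow>
     (\<forall>x0 \<in> W_region PN xs \<rho> \<gamma>. bij (J x0)) \<and>
     (\<forall>x. x 0 \<in> W_region PN xs \<rho> \<gamma> \<and>
        (\<forall>j D. (f has_derivative D) (at (x j)) \<longrightarrow>
            norm (D (x (Suc j) - x j) + f (x j)) \<le> c * (norm (f (x j)))\<^sup>2)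
      \<longrightarrow> x \<longlonglongrightarrow> xs \<and>
          (\<exists>K1>0. \<forall>j. norm ((x (Suc j) - xs) - PN (x (Suc j) - xs)) \<le> K1 * (norm (x j - xs))\<^sup>2) \<and>
          (\<lambda>j. norm (PN (x (Suc j) - xs)) / norm (PN (x j - xs))) \<longlonglongrightarrow> 1 / 2)"
proof -
  obtain r \<gamma> K where r: "0 < r" "r < \<delta>" and \<gamma>: "0 < \<gamma>" and K: "0 \<le> K"
    and bij: "\<And>x. x \<in> wedge r \<gamma> \<Longrightarrow> bij (J x)"
    and step: "\<And>x y. x \<in> wedge r \<gamma> \<Longrightarrow> norm (J x (y - x) + f x) \<le> c * (norm (f x))\<^sup>2 \<Longrightarrow>
      \<bar>\<psi> (y - xs) - \<psi> (x - xs) / 2\<bar> \<le> K * (norm (PX (x - xs)) + norm (x - xs) * \<bar>\<psi> (x - xs)\<bar>)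
      \<and> norm (PX (y - xs)) \<le> K * (norm (x - xs))\<^sup>2"
    using wedge_newton_step by blast
  obtain g \<rho> where g: "0 < g" "g \<le> \<gamma>" "g \<le> 1/8" and \<rho>: "0 < \<rho>" "\<rho> \<le> r"
    and small: "K * (g + \<rho>) \<le> 1/8" "16 * K * \<rho> \<le> 3 * g"
    using halving_parameters[OF K r(1) \<gamma>] by blast
  have sub: "wedge \<rho> g \<subseteq> wedge r \<gamma>"
    using \<rho> g by (intro wedge_mono) auto
  have W: "W_region PN xs \<rho>' \<gamma>' \<subseteq> wedge \<rho> g" if "\<rho>' \<le> \<rho>" "\<gamma>' \<le> g" for \<rho>' \<gamma>'
    using W_region_subset_wedge wedge_mono[OF that] by blast
  have conv: "x \<longlonglongrightarrow> xs \<and>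
      (\<exists>K1>0. \<forall>j. norm ((x (Suc j) - xs) - PN (x (Suc j) - xs)) \<le> K1 * (norm (x j - xs))\<^sup>2) \<and>
      (\<lambda>j. norm (PN (x (Suc j) - xs)) / norm (PN (x j - xs))) \<longlonglongrightarrow> 1 / 2"
    if x0: "x 0 \<in> wedge \<rho> g" and inexact: "\<forall>j D. (f has_derivative D) (at (x j)) \<longrightarrow>
      norm (D (x (Suc j) - x j) + f (x j)) \<le> c * (norm (f (x j)))\<^sup>2" for x
  proof -
    have "\<bar>\<psi> (x (Suc j) - xs) - \<psi> (x j - xs) / 2\<bar> \<le> K * (norm (PX (x j - xs)) + norm (x j - xs) * \<bar>\<psi> (x j - xs)\<bar>)
      \<and> norm (PX (x (Suc j) - xs)) \<le> K * (norm (x j - xs))\<^sup>2" if "x j \<in> wedge \<rho> g" for j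
    proof (rule step)
      show "x j \<in> wedge r \<gamma>"
        using that sub by blast
      then have "x j \<in> ball xs \<delta>"
        by (rule wedge_subset_ball[OF r(2)])
      then show "norm (J (x j) (x (Suc j) - x j) + f (x j)) \<le> c * (norm (f (x j)))\<^sup>2"
        using inexact f_deriv by blast
    qed
    note it = wedge_iteration[OF K g(1,3) small this x0]
    show ?thesis
    proof (intro conjI exI[of _ "K + 1"] allI)
      have "K * (norm (x j - xs))\<^sup>2 \<le> (K + 1) * (norm (x j - xs))\<^sup>2" for j
        by (intro mult_right_mono) auto
      then show "norm ((x (Suc j) - xs) - PN (x (Suc j) - xs)) \<le> (K + 1) * (norm (x j - xs))\<^sup>2" for j
        using order_trans[OF it(2)[of j, unfolded PX_def]] by blast
    qed (use it K in auto)
  qed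
  show ?thesis
    using \<rho>(1) g(1) bij sub W conv by blast
qed

end

lemma simple_singular_root_normalization:
  fixes f :: "'a::euclidean_space \<Rightarrow> 'a" and J :: "'a \<Rightarrow> 'a \<Rightarrow>\<^sub>L 'a" and H :: "'a \<Rightarrow> 'a \<Rightarrow>\<^sub>L 'a \<Rightarrow>\<^sub>L 'a"
  assumes N: "N = {v. J xs v = 0}" and X: "X = range (J xs)"
    and delta_pos: "0 < \<delta>"
    and deriv1: "\<forall>x\<in>ball xs \<delta>. (f has_derivative J x) (at x)"
    and deriv2: "\<forall>x\<in>ball xs \<delta>. (J has_derivative H x) (at x)"
    and lipschitz: "\<forall>x\<in>ball xs \<delta>. \<forall>y\<in>ball xs \<delta>. norm (H x - H y) \<le> L * norm (x - y)"
    and root: "f xs = 0" and phi_nz: "phi \<noteq> 0" and null_span: "N = span {phi}"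
    and closed_range: "closed X"
    and direct_sum: "N \<inter> X = {0}" "{u + v | u v. u \<in> N \<and> v \<in> X} = UNIV"
    and nondeg: "proj_along N X (H xs phi phi) \<noteq> 0"
  obtains \<psi> \<alpha> where "simple_singular_root f J H xs \<delta> L (sgn phi) \<psi> \<alpha>"
    and "\<And>v. proj_along N X v = \<psi> v *\<^sub>R sgn phi"
proof -
  have subX: "subspace X"
    unfolding X
    by (rule linear_subspace_image[OF bounded_linear.linear[OF blinfun.bounded_linear_right] subspace_UNIV])
  obtain \<psi>0 where lin: "linear \<psi>0" and one: "\<psi>0 phi = 1" and ker: "\<And>v. \<psi>0 v = 0 \<longleftrightarrow> v \<in> X"
    and proj: "\<And>v. proj_along N X v = \<psi>0 v *\<^sub>R phi"
    using line_complement_coordinate[OF subX phi_nz direct_sum[unfolded null_span]]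
    unfolding null_span by blast
  obtain \<alpha> where \<alpha>: "0 < \<alpha>" "\<forall>v\<in>X. \<alpha> * norm v \<le> norm (J xs v)"
    using injective_imp_isometric[OF closed_range subX blinfun.bounded_linear_right] direct_sum(1)
    unfolding N by blast
  define \<psi> where "\<psi> v = norm phi * \<psi>0 v" for v
  have sgn_phi: "sgn phi = (1 / norm phi) *\<^sub>R phi"
    by (simp add: sgn_div_norm divide_inverse)
  have scale: "\<psi> v *\<^sub>R sgn phi = \<psi>0 v *\<^sub>R phi" for v
    using phi_nz by (simp add: \<psi>_def sgn_phi)
  have "phi \<in> N"
    by (simp add: null_span span_base)
  show thesis
  proof (rule that)
    show "proj_along N X v = \<psi> v *\<^sub>R sgn phi" for v
      by (simp add: proj scale)
    show "simple_singular_root f J H xs \<delta> L (sgn phi) \<psi> \<alpha>"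
    proof (rule simple_singular_root.intro)
      show "bounded_linear \<psi>"
        unfolding \<psi>_def by (rule bounded_linear_const_mult) (use lin linear_conv_bounded_linear in blast)
      show "norm (sgn phi) = 1"
        using phi_nz by (simp add: norm_sgn)
      show "\<psi> (sgn phi) = 1"
        using phi_nz one by (simp add: \<psi>_def sgn_phi linear_scale[OF lin])
      show "J xs (sgn phi) = 0"
        using \<open>phi \<in> N\<close> by (simp add: N sgn_phi blinfun.scaleR_right)
      show "\<psi> (J xs v) = 0" for v
        using ker by (simp add: \<psi>_def X)
      show "\<alpha> * norm v \<le> norm (J xs v)" if "\<psi> v = 0" for v
        using that \<alpha>(2) ker phi_nz by (simp add: \<psi>_def)
      have "\<psi>0 (H xs phi phi) \<noteq> 0"
        using nondeg by (simp add: proj)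
      then show "\<psi> (H xs (sgn phi) (sgn phi)) \<noteq> 0"
        using phi_nz
        by (simp add: \<psi>_def sgn_phi blinfun.scaleR_left blinfun.scaleR_right linear_scale[OF lin])
    qed (use delta_pos deriv1 deriv2 lipschitz root \<alpha>(1) in auto)
  qed
qed

theorem theorem5p2:
  fixes f :: "real^'n \<Rightarrow> real^'n" and xs :: "real^'n"
    and J :: "real^'n \<Rightarrow> ((real^'n) \<Rightarrow>\<^sub>L (real^'n))"
    and H :: "real^'n \<Rightarrow> ((real^'n) \<Rightarrow>\<^sub>L ((real^'n) \<Rightarrow>\<^sub>L (real^'n)))"
    and phi :: "real^'n" and c :: real and \<delta> :: real
  defines "N \<equiv> {v. blinfun_apply (J xs) v = 0}"
    and "X \<equiv> range (blinfun_apply (J xs))"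
  assumes root: "f xs = 0"
    and delta_pos: "\<delta> > 0"
    and deriv1: "\<forall>x\<in>ball xs \<delta>. (f has_derivative blinfun_apply (J x)) (at x)"
    and deriv2: "\<forall>x\<in>ball xs \<delta>. (J has_derivative blinfun_apply (H x)) (at x)"
    and lipschitz: "\<exists>L. \<forall>x\<in>ball xs \<delta>. \<forall>y\<in>ball xs \<delta>. norm (H x - H y) \<le> L * norm (x - y)"
    and phi_nz: "phi \<noteq> 0"
    and null_span: "N = span {phi}"
    and closed_range: "closed X"
    and direct_sum: "N \<inter> X = {0}" "{u + v | u v. u \<in> N \<and> v \<in> X} = UNIV"
    and nondeg: "proj_along N X (blinfun_apply (blinfun_apply (H xs) phi) phi) \<noteq> 0"
    and D1_nonsing: "\<forall>x. proj_along N X (x - xs) \<noteq> 0 \<longrightarrow>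
        bij_betw (\<lambda>z. proj_along N X (blinfun_apply (blinfun_apply (H xs)
                     (proj_along N X (x - xs))) (proj_along N X z))) N N"
  shows "\<exists>\<rho>0>0. \<exists>\<gamma>0>0. \<forall>\<rho> \<gamma>. 0 < \<rho> \<and> \<rho> \<le> \<rho>0 \<and> 0 < \<gamma> \<and> \<gamma> \<le> \<gamma>0 \<longrightarrow>
     (\<forall>x0 \<in> W_region (proj_along N X) xs \<rho> \<gamma>. bij (blinfun_apply (J x0))) \<and>
     (\<forall>x P V. x 0 \<in> W_region (proj_along N X) xs \<rho> \<gamma> \<and> nlkrylov_iterates f x P V \<and>
        (\<forall>j D. (f has_derivative D) (at (x j)) \<longrightarrow>
            norm (D (x (Suc j) - x j) + f (x j)) \<le> c * (norm (f (x j)))\<^sup>2)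
      \<longrightarrow> x \<longlonglongrightarrow> xs \<and>
          (\<exists>K1>0. \<forall>j. norm ((x (Suc j) - xs) - proj_along N X (x (Suc j) - xs))
                         \<le> K1 * (norm (x j - xs))\<^sup>2) \<and>
          (\<lambda>j. norm (proj_along N X (x (Suc j) - xs)) / norm (proj_along N X (x j - xs)))
             \<longlonglongrightarrow> 1 / 2)"
proof -
  obtain L where L: "\<forall>x\<in>ball xs \<delta>. \<forall>y\<in>ball xs \<delta>. norm (H x - H y) \<le> L * norm (x - y)"
    using lipschitz by blast
  obtain \<psi> \<alpha> where singular_root: "simple_singular_root f J H xs \<delta> L (sgn phi) \<psi> \<alpha>"
    and proj: "\<And>v. proj_along N X v = \<psi> v *\<^sub>R sgn phi"
    using simple_singular_root_normalization[OF N_def[THEN meta_eq_to_obj_eq] X_def[THEN meta_eq_to_obj_eq]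
        delta_pos deriv1 deriv2 L root phi_nz null_span closed_range direct_sum nondeg] by blast
  interpret simple_singular_root f J H xs \<delta> L "sgn phi" \<psi> \<alpha>
    by (fact singular_root)
  have PN: "proj_along N X = PN"
    by (simp add: fun_eq_iff proj PN_def)
  show ?thesis
    unfolding PN using local_convergence[of c]
    by (elim ex_forward conj_forward all_forward imp_forward asm_rl)
      (intro allI impI, elim conjE, erule mp, simp)
qed

end
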